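(* The following assignments define a 2-functor $\mathrm{AM}:\mathbf{Adj}(\mathbf{IdxPos})\to\square\text{-}\mathbf{IdxPos}$: an adjunction $\mathbb A=(P^{\mathbb A},Q^{\mathbb A},L^{\mathbb A},\lambda^{\mathbb A},R^{\mathbb A},\rho^{\mathbb A},\eta^{\mathbb A},\epsilon^{\mathbb A})$ is sent to $(Q^{\mathbb A}\circ(L^{\mathbb A})^{op},\square^{\mathbb A})$ where $\square^{\mathbb A}_X=\lambda^{\mathbb A}_X\circ P^{\mathbb A}(\eta^{\mathbb A}_X)\circ\rho^{\mathbb A}_{L^{\mathbb A}X}$; a 1-arrow $(F,f,G,g,\theta):\mathbb A\to\mathbb B$ is sent to $(F,g(L^{\mathbb A})^{op})$, i.e. the functor $F$ together with the natural transformation with components $g_{L^{\mathbb A}X}:Q^{\mathbb A}(L^{\mathbb A}X)\to Q^{\mathbb B}(GL^{\mathbb A}X)=Q^{\mathbb B}(L^{\mathbb B}FX)$; a 2-arrow $(\alpha,\beta)$ is sent to $\alpha$.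
   Context: A doctrine is a functor $P:\mathcal C^{op}\to\mathbf{Pos}$; for $t:X\to Y$, $P(t):PY\to PX$ is reindexing. In the 2-category $\mathbf{IdxPos}$, a 1-arrow $(F,f):P\to Q$ (with $P:\mathcal C^{op}\to\mathbf{Pos}$, $Q:\mathcal D^{op}\to\mathbf{Pos}$) is a functor $F:\mathcal C\to\mathcal D$ with a natural transformation $f:P\Rightarrow Q\circ F^{op}$; a 2-arrow $\theta:(F,f)\Rightarrow(F',f')$ is a natural transformation $\theta:F\Rightarrow F'$ with $f_X(\alpha)\le Q(\theta_X)(f'_X(\alpha))$ for all $X,\alpha$; composition of $(G,g)$ then $(F,f)$ is $(FG,(fG^{op})\cdot g)$ (components $f_{GX}\circ g_X$), and 2-arrows compose as natural transformations. An interior operator on a doctrine $M:\mathcal C^{op}\to\mathbf{Pos}$ is a natural transformation $\square:M\Rightarrow M$ with $\square_X(\alpha)\le\alpha$ and $\square_X(\alpha)\le\square_X(\square_X\alpha)$. The 2-category $\square\text{-}\mathbf{IdxPos}$ has objects pairs $(M,\square)$ of a doctrine with an interior operator; a 1-arrow $(M,\square)\to(N,\square')$ is a 1-arrow $(F,f):M\to N$ of $\mathbf{IdxPos}$ with $f_X(\square_X\alpha)\le\square'_{FX}(f_X\alpha)$ for all $X,\alpha$; 2-arrows and compositions are those of $\mathbf{IdxPos}$. An adjunction in $\mathbf{IdxPos}$ is written as an octuple $\mathbb A=(P^{\mathbb A},Q^{\mathbb A},L^{\mathbb A},\lambda^{\mathbb A},R^{\mathbb A},\rho^{\mathbb A},\eta^{\mathbb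 A},\epsilon^{\mathbb A})$ with $P^{\mathbb A}:(\mathcal C^{\mathbb A})^{op}\to\mathbf{Pos}$, $Q^{\mathbb A}:(\mathcal D^{\mathbb A})^{op}\to\mathbf{Pos}$, meaning: $L^{\mathbb A}\dashv R^{\mathbb A}$ is an adjunction of categories with unit $\eta^{\mathbb A}$ and counit $\epsilon^{\mathbb A}$, $\lambda^{\mathbb A}:P^{\mathbb A}\Rightarrow Q^{\mathbb A}(L^{\mathbb A})^{op}$ and $\rho^{\mathbb A}:Q^{\mathbb A}\Rightarrow P^{\mathbb A}(R^{\mathbb A})^{op}$ are natural, $\alpha\le P^{\mathbb A}(\eta_X)(\rho_{LX}(\lambda_X\alpha))$ and $\lambda_{RY}(\rho_Y\beta)\le Q^{\mathbb A}(\epsilon_Y)(\beta)$ (dropping superscripts). The 2-category $\mathbf{Adj}(\mathbf{IdxPos})$ has such adjunctions as objects. A 1-arrow $(F,f,G,g,\theta):\mathbb A\to\mathbb B$ consists of 1-arrows $(F,f):P^{\mathbb A}\to P^{\mathbb B}$, $(G,g):Q^{\mathbb A}\to Q^{\mathbb B}$ of $\mathbf{IdxPos}$ and a natural transformation $\theta:FR^{\mathbb A}\Rightarrow R^{\mathbb B}G$ such that: $GL^{\mathbb A}=L^{\mathbb B}F$; $(\theta L^{\mathbb A})\cdot(F\eta^{\mathbb A})=\eta^{\mathbb B}F$; $g_{L^{\mathbb A}X}\circ\lambda^{\mathbb A}_X=\lambda^{\mathbb B}_{FX}\circ f_X$ for all $X$; and $f_{R^{\mathbb A}Y}(\rho^{\mathbb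 A}_Y\beta)\le P^{\mathbb B}(\theta_Y)(\rho^{\mathbb B}_{GY}(g_Y\beta))$ for all $Y$ and $\beta\in Q^{\mathbb A}Y$. A 2-arrow $(\alpha,\beta):(F,f,G,g,\theta)\Rightarrow(F',f',G',g',\theta')$ consists of 2-arrows $\alpha:(F,f)\Rightarrow(F',f')$ and $\beta:(G,g)\Rightarrow(G',g')$ of $\mathbf{IdxPos}$ with $L^{\mathbb B}\alpha=\beta L^{\mathbb A}$ and $\theta'\cdot(\alpha R^{\mathbb A})=(R^{\mathbb B}\beta)\cdot\theta$. Composition of 1-arrows composes the two 1-arrow components in $\mathbf{IdxPos}$ and the $\theta$'s as $(\theta'G)\cdot(F'\theta)$; 2-arrows compose componentwise. *)

theory Defs
  imports Main
begin

record ('o,'a) cat =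
  cobj :: "'o set"
  carr :: "'a set"
  cdom :: "'a \<Rightarrow> 'o"
  ccod :: "'a \<Rightarrow> 'o"
  ccomp :: "'a \<Rightarrow> 'a \<Rightarrow> 'a"   (* ccomp C g f = g \<circ> f *)
  cid :: "'o \<Rightarrow> 'a"

definition hom :: "('o,'a) cat \<Rightarrow> 'o \<Rightarrow> 'o \<Rightarrow> 'a set" where
  "hom C X Y = {f \<in> carr C. cdom C f = X \<and> ccod C f = Y}"

definition category :: "('o,'a) cat \<Rightarrow> bool" where
  "category C \<longleftrightarrow>
    (\<forall>f\<in>carr C. cdom C f \<in> cobj C \<and> ccod C f \<in> cobj C) \<and>
    (\<forall>X\<in>cobj C. cid C X \<in> hom C X X) \<and>
    (\<forall>f\<in>carr C. \<forall>g\<in>carr C. ccod C f = cdom C g \<longrightarrow>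
        ccomp C g f \<in> hom C (cdom C f) (ccod C g)) \<and>
    (\<forall>f\<in>carr C. ccomp C f (cid C (cdom C f)) = f \<and> ccomp C (cid C (ccod C f)) f = f) \<and>
    (\<forall>f\<in>carr C. \<forall>g\<in>carr C. \<forall>h\<in>carr C.
        ccod C f = cdom C g \<and> ccod C g = cdom C h \<longrightarrow>
        ccomp C h (ccomp C g f) = ccomp C (ccomp C h g) f)"

record ('o1,'a1,'o2,'a2) ftor =
  fo :: "'o1 \<Rightarrow> 'o2"
  fa :: "'a1 \<Rightarrow> 'a2"

definition is_functor :: "('o1,'a1) cat \<Rightarrow> ('o2,'a2) cat \<Rightarrow> ('o1,'a1,'o2,'a2) ftor \<Rightarrow> bool" where
  "is_functor C D F \<longleftrightarrow>
    (\<forall>X\<in>cobj C. fo F X \<in> cobj D) \<and>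
    (\<forall>f\<in>carr C. fa F f \<in> hom D (fo F (cdom C f)) (fo F (ccod C f))) \<and>
    (\<forall>X\<in>cobj C. fa F (cid C X) = cid D (fo F X)) \<and>
    (\<forall>f\<in>carr C. \<forall>g\<in>carr C. ccod C f = cdom C g \<longrightarrow>
        fa F (ccomp C g f) = ccomp D (fa F g) (fa F f))"

definition fid :: "('o,'a,'o,'a) ftor" where
  "fid = \<lparr>fo = (\<lambda>X. X), fa = (\<lambda>f. f)\<rparr>"

definition fcomp :: "('o2,'a2,'o3,'a3) ftor \<Rightarrow> ('o1,'a1,'o2,'a2) ftor \<Rightarrow> ('o1,'a1,'o3,'a3) ftor" where
  "fcomp G F = \<lparr>fo = (\<lambda>X. fo G (fo F X)), fa = (\<lambda>f. fa G (fa F f))\<rparr>"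

definition feq :: "('o1,'a1) cat \<Rightarrow> ('o1,'a1,'o2,'a2) ftor \<Rightarrow> ('o1,'a1,'o2,'a2) ftor \<Rightarrow> bool" where
  "feq C F G \<longleftrightarrow> (\<forall>X\<in>cobj C. fo F X = fo G X) \<and> (\<forall>f\<in>carr C. fa F f = fa G f)"

definition is_nat :: "('o1,'a1) cat \<Rightarrow> ('o2,'a2) cat \<Rightarrow> ('o1,'a1,'o2,'a2) ftor \<Rightarrow>
    ('o1,'a1,'o2,'a2) ftor \<Rightarrow> ('o1 \<Rightarrow> 'a2) \<Rightarrow> bool" where
  "is_nat C D F G th \<longleftrightarrow>
    (\<forall>X\<in>cobj C. th X \<in> hom D (fo F X) (fo G X)) \<and>
    (\<forall>f\<in>carr C. ccomp D (th (ccod C f)) (fa F f) = ccomp D (fa G f) (th (cdom C f)))"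

definition nat_eq :: "('o1,'a1) cat \<Rightarrow> ('o1 \<Rightarrow> 'a2) \<Rightarrow> ('o1 \<Rightarrow> 'a2) \<Rightarrow> bool" where
  "nat_eq C th th' \<longleftrightarrow> (\<forall>X\<in>cobj C. th X = th' X)"

definition nat_id :: "('o2,'a2) cat \<Rightarrow> ('o1,'a1,'o2,'a2) ftor \<Rightarrow> ('o1 \<Rightarrow> 'a2)" where
  "nat_id D F = (\<lambda>X. cid D (fo F X))"

definition vcomp :: "('o2,'a2) cat \<Rightarrow> ('o1 \<Rightarrow> 'a2) \<Rightarrow> ('o1 \<Rightarrow> 'a2) \<Rightarrow> ('o1 \<Rightarrow> 'a2)" where
  "vcomp D psi th = (\<lambda>X. ccomp D (psi X) (th X))"

definition hcomp :: "('o3,'a3) cat \<Rightarrow> ('o2,'a2,'o3,'a3) ftor \<Rightarrow> ('o2 \<Rightarrow> 'a3) \<Rightarrow>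
    ('o1,'a1,'o2,'a2) ftor \<Rightarrow> ('o1 \<Rightarrow> 'a2) \<Rightarrow> ('o1 \<Rightarrow> 'a3)" where
  "hcomp E H al' F' al = (\<lambda>X. ccomp E (al' (fo F' X)) (fa H (al X)))"

record ('o,'a,'e) doctrine =
  dcar :: "'o \<Rightarrow> 'e set"
  dle :: "'o \<Rightarrow> 'e \<Rightarrow> 'e \<Rightarrow> bool"
  drx :: "'a \<Rightarrow> 'e \<Rightarrow> 'e"   (* reindexing P(t) : P(cod t) -> P(dom t) *)

definition is_doctrine :: "('o,'a) cat \<Rightarrow> ('o,'a,'e) doctrine \<Rightarrow> bool" where
  "is_doctrine C P \<longleftrightarrow>
    (\<forall>X\<in>cobj C.
       (\<forall>a\<in>dcar P X. dle P X a a) \<and>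
       (\<forall>a\<in>dcar P X. \<forall>b\<in>dcar P X. dle P X a b \<and> dle P X b a \<longrightarrow> a = b) \<and>
       (\<forall>a\<in>dcar P X. \<forall>b\<in>dcar P X. \<forall>c\<in>dcar P X. dle P X a b \<and> dle P X b c \<longrightarrow> dle P X a c)) \<and>
    (\<forall>t\<in>carr C. \<forall>a\<in>dcar P (ccod C t). drx P t a \<in> dcar P (cdom C t)) \<and>
    (\<forall>t\<in>carr C. \<forall>a\<in>dcar P (ccod C t). \<forall>b\<in>dcar P (ccod C t).
        dle P (ccod C t) a b \<longrightarrow> dle P (cdom C t) (drx P t a) (drx P t b)) \<and>
    (\<forall>X\<in>cobj C. \<forall>a\<in>dcar P X. drx P (cid C X) a = a) \<and>
    (\<forall>f\<in>carr C. \<forall>g\<in>carr C. ccod C f = cdom C g \<longrightarrow>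
        (\<forall>a\<in>dcar P (ccod C g). drx P (ccomp C g f) a = drx P f (drx P g a)))"

definition doc_comp :: "('o2,'a2,'e) doctrine \<Rightarrow> ('o1,'a1,'o2,'a2) ftor \<Rightarrow> ('o1,'a1,'e) doctrine" where
  "doc_comp Q F = \<lparr>dcar = (\<lambda>X. dcar Q (fo F X)), dle = (\<lambda>X. dle Q (fo F X)),
                   drx = (\<lambda>t. drx Q (fa F t))\<rparr>"

definition is_dnat :: "('o,'a) cat \<Rightarrow> ('o,'a,'e1) doctrine \<Rightarrow> ('o,'a,'e2) doctrine \<Rightarrow>
    ('o \<Rightarrow> 'e1 \<Rightarrow> 'e2) \<Rightarrow> bool" where
  "is_dnat C P P' f \<longleftrightarrow>
    (\<forall>X\<in>cobj C. \<forall>a\<in>dcar P X. f X a \<in> dcar P' X) \<and>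
    (\<forall>X\<in>cobj C. \<forall>a\<in>dcar P X. \<forall>b\<in>dcar P X. dle P X a b \<longrightarrow> dle P' X (f X a) (f X b)) \<and>
    (\<forall>t\<in>carr C. \<forall>a\<in>dcar P (ccod C t). f (cdom C t) (drx P t a) = drx P' t (f (ccod C t) a))"

type_synonym ('o1,'a1,'o2,'a2,'e1,'e2) idx1 = "('o1,'a1,'o2,'a2) ftor \<times> ('o1 \<Rightarrow> 'e1 \<Rightarrow> 'e2)"

definition idx_1arrow :: "('o1,'a1) cat \<Rightarrow> ('o2,'a2) cat \<Rightarrow> ('o1,'a1,'e1) doctrine \<Rightarrow>
    ('o2,'a2,'e2) doctrine \<Rightarrow> ('o1,'a1,'o2,'a2,'e1,'e2) idx1 \<Rightarrow> bool" where
  "idx_1arrow C D P Q Ff \<longleftrightarrow> is_functor C D (fst Ff) \<and> is_dnat C P (doc_comp Q (fst Ff)) (snd Ff)"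

definition idx_2arrow :: "('o1,'a1) cat \<Rightarrow> ('o2,'a2) cat \<Rightarrow> ('o1,'a1,'e1) doctrine \<Rightarrow>
    ('o2,'a2,'e2) doctrine \<Rightarrow> ('o1,'a1,'o2,'a2,'e1,'e2) idx1 \<Rightarrow>
    ('o1,'a1,'o2,'a2,'e1,'e2) idx1 \<Rightarrow> ('o1 \<Rightarrow> 'a2) \<Rightarrow> bool" where
  "idx_2arrow C D P Q Ff Ff' th \<longleftrightarrow>
    is_nat C D (fst Ff) (fst Ff') th \<and>
    (\<forall>X\<in>cobj C. \<forall>a\<in>dcar P X.
       dle Q (fo (fst Ff) X) (snd Ff X a) (drx Q (th X) (snd Ff' X a)))"

definition idx_id1 :: "('o,'a,'o,'a,'e,'e) idx1" where
  "idx_id1 = (fid, (\<lambda>X a. a))"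

definition idx_comp1 :: "('o2,'a2,'o3,'a3,'e2,'e3) idx1 \<Rightarrow> ('o1,'a1,'o2,'a2,'e1,'e2) idx1 \<Rightarrow>
    ('o1,'a1,'o3,'a3,'e1,'e3) idx1" where
  "idx_comp1 Gg Ff = (fcomp (fst Gg) (fst Ff), (\<lambda>X a. snd Gg (fo (fst Ff) X) (snd Ff X a)))"

definition idx_eq1 :: "('o1,'a1) cat \<Rightarrow> ('o1,'a1,'e1) doctrine \<Rightarrow>
    ('o1,'a1,'o2,'a2,'e1,'e2) idx1 \<Rightarrow> ('o1,'a1,'o2,'a2,'e1,'e2) idx1 \<Rightarrow> bool" where
  "idx_eq1 C P Ff Gg \<longleftrightarrow> feq C (fst Ff) (fst Gg) \<and>
     (\<forall>X\<in>cobj C. \<forall>a\<in>dcar P X. snd Ff X a = snd Gg X a)"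

definition interior_op :: "('o,'a) cat \<Rightarrow> ('o,'a,'e) doctrine \<Rightarrow> ('o \<Rightarrow> 'e \<Rightarrow> 'e) \<Rightarrow> bool" where
  "interior_op C M bx \<longleftrightarrow> is_dnat C M M bx \<and>
     (\<forall>X\<in>cobj C. \<forall>a\<in>dcar M X. dle M X (bx X a) a \<and> dle M X (bx X a) (bx X (bx X a)))"

definition box_1arrow :: "('o1,'a1) cat \<Rightarrow> ('o2,'a2) cat \<Rightarrow> ('o1,'a1,'e1) doctrine \<Rightarrow>
    ('o1 \<Rightarrow> 'e1 \<Rightarrow> 'e1) \<Rightarrow> ('o2,'a2,'e2) doctrine \<Rightarrow> ('o2 \<Rightarrow> 'e2 \<Rightarrow> 'e2) \<Rightarrow>
    ('o1,'a1,'o2,'a2,'e1,'e2) idx1 \<Rightarrow> bool" where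
  "box_1arrow C D M bx N bx' Ff \<longleftrightarrow> idx_1arrow C D M N Ff \<and>
     (\<forall>X\<in>cobj C. \<forall>a\<in>dcar M X.
        dle N (fo (fst Ff) X) (snd Ff X (bx X a)) (bx' (fo (fst Ff) X) (snd Ff X a)))"

record ('oc,'ac,'od,'ad,'e1,'e2) adj =
  aC :: "('oc,'ac) cat"
  aD :: "('od,'ad) cat"
  aP :: "('oc,'ac,'e1) doctrine"
  aQ :: "('od,'ad,'e2) doctrine"
  aL :: "('oc,'ac,'od,'ad) ftor"
  alam :: "'oc \<Rightarrow> 'e1 \<Rightarrow> 'e2"
  aR :: "('od,'ad,'oc,'ac) ftor"
  arho :: "'od \<Rightarrow> 'e2 \<Rightarrow> 'e1"
  aeta :: "'oc \<Rightarrow> 'ac"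
  aeps :: "'od \<Rightarrow> 'ad"

definition is_adj :: "('oc,'ac,'od,'ad,'e1,'e2) adj \<Rightarrow> bool" where
  "is_adj A \<longleftrightarrow>
    category (aC A) \<and> category (aD A) \<and>
    is_doctrine (aC A) (aP A) \<and> is_doctrine (aD A) (aQ A) \<and>
    is_functor (aC A) (aD A) (aL A) \<and> is_functor (aD A) (aC A) (aR A) \<and>
    is_nat (aC A) (aC A) fid (fcomp (aR A) (aL A)) (aeta A) \<and>
    is_nat (aD A) (aD A) (fcomp (aL A) (aR A)) fid (aeps A) \<and>
    (\<forall>X\<in>cobj (aC A). ccomp (aD A) (aeps A (fo (aL A) X)) (fa (aL A) (aeta A X))
                        = cid (aD A) (fo (aL A) X)) \<and>
    (\<forall>Y\<in>cobj (aD A). ccomp (aC A) (fa (aR A) (aeps A Y)) (aeta A (fo (aR A) Y))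
                        = cid (aC A) (fo (aR A) Y)) \<and>
    is_dnat (aC A) (aP A) (doc_comp (aQ A) (aL A)) (alam A) \<and>
    is_dnat (aD A) (aQ A) (doc_comp (aP A) (aR A)) (arho A) \<and>
    (\<forall>X\<in>cobj (aC A). \<forall>a\<in>dcar (aP A) X.
       dle (aP A) X a (drx (aP A) (aeta A X) (arho A (fo (aL A) X) (alam A X a)))) \<and>
    (\<forall>Y\<in>cobj (aD A). \<forall>b\<in>dcar (aQ A) Y.
       dle (aQ A) (fo (aL A) (fo (aR A) Y)) (alam A (fo (aR A) Y) (arho A Y b)) (drx (aQ A) (aeps A Y) b))"

record ('oc,'ac,'od,'ad,'e1,'e2,'oc2,'ac2,'od2,'ad2,'f1,'f2) amor =
  mF :: "('oc,'ac,'oc2,'ac2) ftor"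
  mf :: "'oc \<Rightarrow> 'e1 \<Rightarrow> 'f1"
  mG :: "('od,'ad,'od2,'ad2) ftor"
  mg :: "'od \<Rightarrow> 'e2 \<Rightarrow> 'f2"
  mth :: "'od \<Rightarrow> 'ac2"

definition is_adj_1arrow :: "('oc,'ac,'od,'ad,'e1,'e2) adj \<Rightarrow> ('oc2,'ac2,'od2,'ad2,'f1,'f2) adj \<Rightarrow>
    ('oc,'ac,'od,'ad,'e1,'e2,'oc2,'ac2,'od2,'ad2,'f1,'f2) amor \<Rightarrow> bool" where
  "is_adj_1arrow A B M \<longleftrightarrow>
    idx_1arrow (aC A) (aC B) (aP A) (aP B) (mF M, mf M) \<and>
    idx_1arrow (aD A) (aD B) (aQ A) (aQ B) (mG M, mg M) \<and>
    is_nat (aD A) (aC B) (fcomp (mF M) (aR A)) (fcomp (aR B) (mG M)) (mth M) \<and>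
    feq (aC A) (fcomp (mG M) (aL A)) (fcomp (aL B) (mF M)) \<and>
    (\<forall>X\<in>cobj (aC A). ccomp (aC B) (mth M (fo (aL A) X)) (fa (mF M) (aeta A X))
                       = aeta B (fo (mF M) X)) \<and>
    (\<forall>X\<in>cobj (aC A). \<forall>a\<in>dcar (aP A) X.
       mg M (fo (aL A) X) (alam A X a) = alam B (fo (mF M) X) (mf M X a)) \<and>
    (\<forall>Y\<in>cobj (aD A). \<forall>b\<in>dcar (aQ A) Y.
       dle (aP B) (fo (mF M) (fo (aR A) Y)) (mf M (fo (aR A) Y) (arho A Y b))
         (drx (aP B) (mth M Y) (arho B (fo (mG M) Y) (mg M Y b))))"

definition is_adj_2arrow :: "('oc,'ac,'od,'ad,'e1,'e2) adj \<Rightarrow> ('oc2,'ac2,'od2,'ad2,'f1,'f2) adj \<Rightarrow>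
    ('oc,'ac,'od,'ad,'e1,'e2,'oc2,'ac2,'od2,'ad2,'f1,'f2) amor \<Rightarrow>
    ('oc,'ac,'od,'ad,'e1,'e2,'oc2,'ac2,'od2,'ad2,'f1,'f2) amor \<Rightarrow>
    ('oc \<Rightarrow> 'ac2) \<times> ('od \<Rightarrow> 'ad2) \<Rightarrow> bool" where
  "is_adj_2arrow A B M N ab \<longleftrightarrow>
    idx_2arrow (aC A) (aC B) (aP A) (aP B) (mF M, mf M) (mF N, mf N) (fst ab) \<and>
    idx_2arrow (aD A) (aD B) (aQ A) (aQ B) (mG M, mg M) (mG N, mg N) (snd ab) \<and>
    (\<forall>X\<in>cobj (aC A). fa (aL B) (fst ab X) = snd ab (fo (aL A) X)) \<and>
    (\<forall>Y\<in>cobj (aD A). ccomp (aC B) (mth N Y) (fst ab (fo (aR A) Y))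
                      = ccomp (aC B) (fa (aR B) (snd ab Y)) (mth M Y))"

definition adj_id1 :: "('oc,'ac,'od,'ad,'e1,'e2) adj \<Rightarrow>
    ('oc,'ac,'od,'ad,'e1,'e2,'oc,'ac,'od,'ad,'e1,'e2) amor" where
  "adj_id1 A = \<lparr>mF = fid, mf = (\<lambda>X a. a), mG = fid, mg = (\<lambda>Y b. b),
                mth = (\<lambda>Y. cid (aC A) (fo (aR A) Y))\<rparr>"

definition adj_comp1 :: "('oc3,'ac3,'od3,'ad3,'g1,'g2) adj \<Rightarrow>
    ('oc2,'ac2,'od2,'ad2,'f1,'f2,'oc3,'ac3,'od3,'ad3,'g1,'g2) amor \<Rightarrow>
    ('oc,'ac,'od,'ad,'e1,'e2,'oc2,'ac2,'od2,'ad2,'f1,'f2) amor \<Rightarrow>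
    ('oc,'ac,'od,'ad,'e1,'e2,'oc3,'ac3,'od3,'ad3,'g1,'g2) amor" where
  "adj_comp1 Cc M' M =
    \<lparr>mF = fcomp (mF M') (mF M), mf = (\<lambda>X a. mf M' (fo (mF M) X) (mf M X a)),
     mG = fcomp (mG M') (mG M), mg = (\<lambda>Y b. mg M' (fo (mG M) Y) (mg M Y b)),
     mth = (\<lambda>Y. ccomp (aC Cc) (mth M' (fo (mG M) Y)) (fa (mF M') (mth M Y)))\<rparr>"

definition adj_id2 :: "('oc2,'ac2,'od2,'ad2,'f1,'f2) adj \<Rightarrow>
    ('oc,'ac,'od,'ad,'e1,'e2,'oc2,'ac2,'od2,'ad2,'f1,'f2) amor \<Rightarrow>
    ('oc \<Rightarrow> 'ac2) \<times> ('od \<Rightarrow> 'ad2)" where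
  "adj_id2 B M = (nat_id (aC B) (mF M), nat_id (aD B) (mG M))"

definition adj_vcomp2 :: "('oc2,'ac2,'od2,'ad2,'f1,'f2) adj \<Rightarrow>
    ('oc \<Rightarrow> 'ac2) \<times> ('od \<Rightarrow> 'ad2) \<Rightarrow> ('oc \<Rightarrow> 'ac2) \<times> ('od \<Rightarrow> 'ad2) \<Rightarrow>
    ('oc \<Rightarrow> 'ac2) \<times> ('od \<Rightarrow> 'ad2)" where
  "adj_vcomp2 B ab' ab = (vcomp (aC B) (fst ab') (fst ab), vcomp (aD B) (snd ab') (snd ab))"

definition adj_hcomp2 :: "('oc3,'ac3,'od3,'ad3,'g1,'g2) adj \<Rightarrow>
    ('oc2,'ac2,'od2,'ad2,'f1,'f2,'oc3,'ac3,'od3,'ad3,'g1,'g2) amor \<Rightarrow>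
    ('oc2 \<Rightarrow> 'ac3) \<times> ('od2 \<Rightarrow> 'ad3) \<Rightarrow>
    ('oc,'ac,'od,'ad,'e1,'e2,'oc2,'ac2,'od2,'ad2,'f1,'f2) amor \<Rightarrow>
    ('oc \<Rightarrow> 'ac2) \<times> ('od \<Rightarrow> 'ad2) \<Rightarrow> ('oc \<Rightarrow> 'ac3) \<times> ('od \<Rightarrow> 'ad3)" where
  "adj_hcomp2 Cc M' ab' N ab =
    (hcomp (aC Cc) (mF M') (fst ab') (mF N) (fst ab), hcomp (aD Cc) (mG M') (snd ab') (mG N) (snd ab))"

definition AM_doc :: "('oc,'ac,'od,'ad,'e1,'e2) adj \<Rightarrow> ('oc,'ac,'e2) doctrine" where
  "AM_doc A = doc_comp (aQ A) (aL A)"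

definition AM_box :: "('oc,'ac,'od,'ad,'e1,'e2) adj \<Rightarrow> ('oc \<Rightarrow> 'e2 \<Rightarrow> 'e2)" where
  "AM_box A = (\<lambda>X b. alam A X (drx (aP A) (aeta A X) (arho A (fo (aL A) X) b)))"

definition AM_1 :: "('oc,'ac,'od,'ad,'e1,'e2) adj \<Rightarrow>
    ('oc,'ac,'od,'ad,'e1,'e2,'oc2,'ac2,'od2,'ad2,'f1,'f2) amor \<Rightarrow>
    ('oc,'ac,'oc2,'ac2,'e2,'f2) idx1" where
  "AM_1 A M = (mF M, (\<lambda>X. mg M (fo (aL A) X)))"

definition AM_2 :: "('oc \<Rightarrow> 'ac2) \<times> ('od \<Rightarrow> 'ad2) \<Rightarrow> ('oc \<Rightarrow> 'ac2)" where
  "AM_2 ab = fst ab"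

end

theory Submission
  imports Defs
begin

text \<open>\<open>Q \<circ> L\<^sup>o\<^sup>p\<close> is a doctrine because precomposition with a functor preserves doctrines,
  and \<open>\<box> = \<lambda> \<circ> P(\<eta>) \<circ> \<rho>L\<close> is natural as a composite of three natural transformations of
  doctrines. Naturality of \<open>\<lambda>\<close> rewrites \<open>\<box>\<close> as \<open>Q(L\<eta>) \<circ> \<lambda>RL \<circ> \<rho>L\<close>, which the counit
  inequality bounds by \<open>Q(L\<eta>) \<circ> Q(\<epsilon>L) = id\<close> (a triangle identity); and \<open>\<box> \<le> \<box>\<box>\<close> is the
  unit inequality \<open>id \<le> P(\<eta>) \<circ> \<rho>L \<circ> \<lambda>\<close> pushed through \<open>\<lambda>\<close>. For a 1-arrow, \<open>gL\<close> commutes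
  with \<open>\<lambda>\<close>, and the \<open>\<rho>\<close>-inequality together with \<open>\<theta>L \<circ> F\<eta> = \<eta>F\<close> carries \<open>f\<close> past
  \<open>P(\<eta>) \<circ> \<rho>L\<close>; this gives \<open>gL \<circ> \<box> \<le> \<box>' \<circ> gL\<close>. The remaining 2-functor laws hold on the nose.\<close>

lemma homI: "f \<in> carr C \<Longrightarrow> cdom C f = X \<Longrightarrow> ccod C f = Y \<Longrightarrow> f \<in> hom C X Y"
  by (simp add: hom_def)

lemma carr_in_hom: "f \<in> carr C \<Longrightarrow> f \<in> hom C (cdom C f) (ccod C f)"
  by (simp add: hom_def)

lemma category_hom_objs: "category C \<Longrightarrow> f \<in> hom C X Y \<Longrightarrow> X \<in> cobj C \<and> Y \<in> cobj C"
  unfolding category_def hom_def by auto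

lemma functor_obj: "is_functor C D F \<Longrightarrow> X \<in> cobj C \<Longrightarrow> fo F X \<in> cobj D"
  unfolding is_functor_def by auto

lemma functor_hom: "is_functor C D F \<Longrightarrow> f \<in> hom C X Y \<Longrightarrow> fa F f \<in> hom D (fo F X) (fo F Y)"
  unfolding is_functor_def hom_def by auto

lemma functor_id: "is_functor C D F \<Longrightarrow> X \<in> cobj C \<Longrightarrow> fa F (cid C X) = cid D (fo F X)"
  unfolding is_functor_def by auto

lemma functor_comp: "is_functor C D F \<Longrightarrow> f \<in> hom C X Y \<Longrightarrow> g \<in> hom C Y Z \<Longrightarrow>
    fa F (ccomp C g f) = ccomp D (fa F g) (fa F f)"
  unfolding is_functor_def hom_def by auto

lemma nat_hom: "is_nat C D F G th \<Longrightarrow> X \<in> cobj C \<Longrightarrow> th X \<in> hom D (fo F X) (fo G X)"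
  unfolding is_nat_def by auto

lemma nat_naturality: "is_nat C D F G th \<Longrightarrow> f \<in> hom C X Y \<Longrightarrow>
    ccomp D (th Y) (fa F f) = ccomp D (fa G f) (th X)"
  unfolding is_nat_def hom_def by auto

lemma doctrine_refl: "is_doctrine C P \<Longrightarrow> X \<in> cobj C \<Longrightarrow> a \<in> dcar P X \<Longrightarrow> dle P X a a"
  unfolding is_doctrine_def by auto

lemma doctrine_antisym: "is_doctrine C P \<Longrightarrow> X \<in> cobj C \<Longrightarrow> a \<in> dcar P X \<Longrightarrow> b \<in> dcar P X \<Longrightarrow>
    dle P X a b \<Longrightarrow> dle P X b a \<Longrightarrow> a = b"
  unfolding is_doctrine_def by blast

lemma doctrine_trans: "is_doctrine C P \<Longrightarrow> X \<in> cobj C \<Longrightarrow>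
    a \<in> dcar P X \<Longrightarrow> b \<in> dcar P X \<Longrightarrow> c \<in> dcar P X \<Longrightarrow>
    dle P X a b \<Longrightarrow> dle P X b c \<Longrightarrow> dle P X a c"
  unfolding is_doctrine_def by blast

lemma doctrine_reindex_mem: "is_doctrine C P \<Longrightarrow> t \<in> hom C X Y \<Longrightarrow> a \<in> dcar P Y \<Longrightarrow>
    drx P t a \<in> dcar P X"
  unfolding is_doctrine_def hom_def by auto

lemma doctrine_reindex_mono: "is_doctrine C P \<Longrightarrow> t \<in> hom C X Y \<Longrightarrow>
    a \<in> dcar P Y \<Longrightarrow> b \<in> dcar P Y \<Longrightarrow> dle P Y a b \<Longrightarrow> dle P X (drx P t a) (drx P t b)"
  unfolding is_doctrine_def hom_def by auto

lemma doctrine_reindex_id: "is_doctrine C P \<Longrightarrow> X \<in> cobj C \<Longrightarrow> a \<in> dcar P X \<Longrightarrow>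
    drx P (cid C X) a = a"
  unfolding is_doctrine_def by auto

lemma doctrine_reindex_comp: "is_doctrine C P \<Longrightarrow> f \<in> hom C X Y \<Longrightarrow> g \<in> hom C Y Z \<Longrightarrow>
    a \<in> dcar P Z \<Longrightarrow> drx P (ccomp C g f) a = drx P f (drx P g a)"
  unfolding is_doctrine_def hom_def by auto

lemma dnat_mem: "is_dnat C P Q f \<Longrightarrow> X \<in> cobj C \<Longrightarrow> a \<in> dcar P X \<Longrightarrow> f X a \<in> dcar Q X"
  unfolding is_dnat_def by auto

lemma dnat_mono: "is_dnat C P Q f \<Longrightarrow> X \<in> cobj C \<Longrightarrow> a \<in> dcar P X \<Longrightarrow> b \<in> dcar P X \<Longrightarrow>
    dle P X a b \<Longrightarrow> dle Q X (f X a) (f X b)"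
  unfolding is_dnat_def by auto

lemma dnat_naturality: "is_dnat C P Q f \<Longrightarrow> t \<in> hom C X Y \<Longrightarrow> a \<in> dcar P Y \<Longrightarrow>
    f X (drx P t a) = drx Q t (f Y a)"
  unfolding is_dnat_def hom_def by auto

lemma doc_comp_simps [simp]:
  "dcar (doc_comp Q F) X = dcar Q (fo F X)"
  "dle (doc_comp Q F) X = dle Q (fo F X)"
  "drx (doc_comp Q F) t = drx Q (fa F t)"
  by (simp_all add: doc_comp_def)

lemma fcomp_simps [simp]: "fo (fcomp G F) X = fo G (fo F X)" "fa (fcomp G F) f = fa G (fa F f)"
  by (simp_all add: fcomp_def)

lemma fid_simps [simp]: "fo fid X = X" "fa fid f = f"
  by (simp_all add: fid_def)

lemma is_functor_fid: "is_functor C C fid"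
  unfolding is_functor_def hom_def by simp

lemma is_functor_fcomp: "is_functor C D F \<Longrightarrow> is_functor D E G \<Longrightarrow> is_functor C E (fcomp G F)"
  unfolding is_functor_def hom_def by simp

lemma doc_comp_fid: "doc_comp P fid = P"
  by (simp add: doc_comp_def)

lemma doc_comp_fcomp: "doc_comp (doc_comp P G) F = doc_comp P (fcomp G F)"
  by (simp add: doc_comp_def)

lemma is_doctrine_doc_comp:
  assumes Q: "is_doctrine D Q" and F: "is_functor C D F"
  shows "is_doctrine C (doc_comp Q F)"
  unfolding is_doctrine_def doc_comp_simps
proof (intro conjI ballI impI allI)
  fix X a assume "X \<in> cobj C" "a \<in> dcar Q (fo F X)"
  then show "dle Q (fo F X) a a"
    using doctrine_refl[OF Q functor_obj[OF F]] by blast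
next
  fix X a b assume "X \<in> cobj C" "a \<in> dcar Q (fo F X)" "b \<in> dcar Q (fo F X)"
    "dle Q (fo F X) a b \<and> dle Q (fo F X) b a"
  then show "a = b"
    using doctrine_antisym[OF Q functor_obj[OF F]] by blast
next
  fix X a b c assume "X \<in> cobj C" "a \<in> dcar Q (fo F X)" "b \<in> dcar Q (fo F X)"
    "c \<in> dcar Q (fo F X)" "dle Q (fo F X) a b \<and> dle Q (fo F X) b c"
  then show "dle Q (fo F X) a c"
    using doctrine_trans[OF Q functor_obj[OF F]] by blast
next
  fix t a assume "t \<in> carr C" "a \<in> dcar Q (fo F (ccod C t))"
  then show "drx Q (fa F t) a \<in> dcar Q (fo F (cdom C t))"
    using doctrine_reindex_mem[OF Q functor_hom[OF F carr_in_hom]] by blast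
next
  fix t a b assume "t \<in> carr C" "a \<in> dcar Q (fo F (ccod C t))" "b \<in> dcar Q (fo F (ccod C t))"
    "dle Q (fo F (ccod C t)) a b"
  then show "dle Q (fo F (cdom C t)) (drx Q (fa F t) a) (drx Q (fa F t) b)"
    using doctrine_reindex_mono[OF Q functor_hom[OF F carr_in_hom]] by blast
next
  fix X a assume "X \<in> cobj C" "a \<in> dcar Q (fo F X)"
  then show "drx Q (fa F (cid C X)) a = a"
    by (simp add: functor_id[OF F] doctrine_reindex_id[OF Q functor_obj[OF F]])
next
  fix f g a assume "f \<in> carr C" "g \<in> carr C" "ccod C f = cdom C g" "a \<in> dcar Q (fo F (ccod C g))"
  moreover from this have "f \<in> hom C (cdom C f) (cdom C g)" "g \<in> hom C (cdom C g) (ccod C g)"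
    by (simp_all add: homI)
  ultimately show "drx Q (fa F (ccomp C g f)) a = drx Q (fa F f) (drx Q (fa F g) a)"
    by (simp add: functor_comp[OF F] doctrine_reindex_comp[OF Q functor_hom[OF F] functor_hom[OF F]])
qed

lemma is_dnat_comp:
  "category C \<Longrightarrow> is_dnat C P Q f \<Longrightarrow> is_dnat C Q R g \<Longrightarrow>
    is_dnat C P R (\<lambda>X a. g X (f X a))"
  unfolding is_dnat_def category_def by auto

lemma is_dnat_doc_comp:
  assumes F: "is_functor C D F" and f: "is_dnat D P Q f"
  shows "is_dnat C (doc_comp P F) (doc_comp Q F) (\<lambda>X. f (fo F X))"
  unfolding is_dnat_def doc_comp_simps
proof (intro conjI ballI impI)
  fix X a assume "X \<in> cobj C" "a \<in> dcar P (fo F X)"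
  then show "f (fo F X) a \<in> dcar Q (fo F X)"
    by (rule dnat_mem[OF f functor_obj[OF F]])
next
  fix X a b assume "X \<in> cobj C" "a \<in> dcar P (fo F X)" "b \<in> dcar P (fo F X)" "dle P (fo F X) a b"
  then show "dle Q (fo F X) (f (fo F X) a) (f (fo F X) b)"
    by (rule dnat_mono[OF f functor_obj[OF F]])
next
  fix t a assume "t \<in> carr C" "a \<in> dcar P (fo F (ccod C t))"
  then show "f (fo F (cdom C t)) (drx P (fa F t) a) = drx Q (fa F t) (f (fo F (ccod C t)) a)"
    by (intro dnat_naturality[OF f functor_hom[OF F carr_in_hom]])
qed

lemma is_dnat_doc_comp_feq:
  "feq C F G \<Longrightarrow> is_dnat C P (doc_comp Q F) f \<Longrightarrow> is_dnat C P (doc_comp Q G) f"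
  unfolding is_dnat_def feq_def by simp

lemma is_dnat_reindex_nat:
  assumes C: "category C" and P: "is_doctrine D P"
    and F: "is_functor C D F" and G: "is_functor C D G" and th: "is_nat C D F G th"
  shows "is_dnat C (doc_comp P G) (doc_comp P F) (\<lambda>X. drx P (th X))"
  unfolding is_dnat_def doc_comp_simps
proof (intro conjI ballI impI)
  fix X a assume "X \<in> cobj C" "a \<in> dcar P (fo G X)"
  then show "drx P (th X) a \<in> dcar P (fo F X)"
    using doctrine_reindex_mem[OF P nat_hom[OF th]] by blast
next
  fix X a b assume "X \<in> cobj C" "a \<in> dcar P (fo G X)" "b \<in> dcar P (fo G X)" "dle P (fo G X) a b"
  then show "dle P (fo F X) (drx P (th X) a) (drx P (th X) b)"
    using doctrine_reindex_mono[OF P nat_hom[OF th]] by blast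
next
  fix t a assume t: "t \<in> carr C" and a: "a \<in> dcar P (fo G (ccod C t))"
  define X Y where "X = cdom C t" and "Y = ccod C t"
  have t: "t \<in> hom C X Y" using t by (simp add: X_def Y_def homI)
  have X: "X \<in> cobj C" and Y: "Y \<in> cobj C" using category_hom_objs[OF C t] by auto
  have "drx P (th X) (drx P (fa G t) a) = drx P (ccomp D (fa G t) (th X)) a"
    using doctrine_reindex_comp[OF P nat_hom[OF th X] functor_hom[OF G t]] a Y_def by simp
  also have "\<dots> = drx P (ccomp D (th Y) (fa F t)) a"
    by (simp add: nat_naturality[OF th t])
  also have "\<dots> = drx P (fa F t) (drx P (th Y) a)"
    using doctrine_reindex_comp[OF P functor_hom[OF F t] nat_hom[OF th Y]] a Y_def by simp
  finally show "drx P (th (cdom C t)) (drx P (fa G t) a) = drx P (fa F t) (drx P (th (ccod C t)) a)"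
    by (simp add: X_def Y_def)
qed

context
  fixes A :: "('oc,'ac,'od,'ad,'e1,'e2) adj"
  assumes adj: "is_adj A"
begin

lemma
  shows adj_category: "category (aC A)"
    and adj_P: "is_doctrine (aC A) (aP A)"
    and adj_Q: "is_doctrine (aD A) (aQ A)"
    and adj_L: "is_functor (aC A) (aD A) (aL A)"
    and adj_R: "is_functor (aD A) (aC A) (aR A)"
    and adj_unit: "is_nat (aC A) (aC A) fid (fcomp (aR A) (aL A)) (aeta A)"
    and adj_counit: "is_nat (aD A) (aD A) (fcomp (aL A) (aR A)) fid (aeps A)"
    and adj_lam: "is_dnat (aC A) (aP A) (doc_comp (aQ A) (aL A)) (alam A)"
    and adj_rho: "is_dnat (aD A) (aQ A) (doc_comp (aP A) (aR A)) (arho A)"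
  using adj unfolding is_adj_def by auto

lemma adj_triangle_L: "X \<in> cobj (aC A) \<Longrightarrow>
    ccomp (aD A) (aeps A (fo (aL A) X)) (fa (aL A) (aeta A X)) = cid (aD A) (fo (aL A) X)"
  using adj unfolding is_adj_def by auto

lemma adj_lam_rho_unit: "X \<in> cobj (aC A) \<Longrightarrow> a \<in> dcar (aP A) X \<Longrightarrow>
    dle (aP A) X a (drx (aP A) (aeta A X) (arho A (fo (aL A) X) (alam A X a)))"
  using adj unfolding is_adj_def by auto

lemma adj_lam_rho_counit: "Y \<in> cobj (aD A) \<Longrightarrow> b \<in> dcar (aQ A) Y \<Longrightarrow>
    dle (aQ A) (fo (aL A) (fo (aR A) Y)) (alam A (fo (aR A) Y) (arho A Y b)) (drx (aQ A) (aeps A Y) b)"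
  using adj unfolding is_adj_def by auto

lemma adj_unit_hom: "X \<in> cobj (aC A) \<Longrightarrow> aeta A X \<in> hom (aC A) X (fo (aR A) (fo (aL A) X))"
  using nat_hom[OF adj_unit] by fastforce

lemma adj_counit_hom: "Y \<in> cobj (aD A) \<Longrightarrow> aeps A Y \<in> hom (aD A) (fo (aL A) (fo (aR A) Y)) Y"
  using nat_hom[OF adj_counit] by fastforce

lemma is_doctrine_AM_doc: "is_doctrine (aC A) (AM_doc A)"
  unfolding AM_doc_def by (rule is_doctrine_doc_comp[OF adj_Q adj_L])

lemma is_dnat_AM_box: "is_dnat (aC A) (AM_doc A) (AM_doc A) (AM_box A)"
proof -
  have rho_L: "is_dnat (aC A) (AM_doc A) (doc_comp (aP A) (fcomp (aR A) (aL A)))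
      (\<lambda>X. arho A (fo (aL A) X))"
    using is_dnat_doc_comp[OF adj_L adj_rho] by (simp add: AM_doc_def doc_comp_fcomp)
  have eta: "is_dnat (aC A) (doc_comp (aP A) (fcomp (aR A) (aL A))) (aP A) (\<lambda>X. drx (aP A) (aeta A X))"
    using is_dnat_reindex_nat[OF adj_category adj_P is_functor_fid is_functor_fcomp[OF adj_L adj_R] adj_unit]
    by (simp add: doc_comp_fid)
  show ?thesis
    using is_dnat_comp[OF adj_category is_dnat_comp[OF adj_category rho_L eta] adj_lam]
    by (simp add: AM_box_def AM_doc_def)
qed

lemma AM_box_le:
  assumes X: "X \<in> cobj (aC A)" and b: "b \<in> dcar (aQ A) (fo (aL A) X)"
  shows "dle (aQ A) (fo (aL A) X) (AM_box A X b) b"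
proof -
  let ?LX = "fo (aL A) X"
  let ?RLX = "fo (aR A) ?LX"
  let ?L_eta = "fa (aL A) (aeta A X)"
  have LX: "?LX \<in> cobj (aD A)" and RLX: "?RLX \<in> cobj (aC A)"
    using functor_obj[OF adj_L X] functor_obj[OF adj_R] by auto
  have L_eta: "?L_eta \<in> hom (aD A) ?LX (fo (aL A) ?RLX)"
    by (rule functor_hom[OF adj_L adj_unit_hom[OF X]])
  have rho: "arho A ?LX b \<in> dcar (aP A) ?RLX"
    using dnat_mem[OF adj_rho LX b] by simp
  have lam_rho: "alam A ?RLX (arho A ?LX b) \<in> dcar (aQ A) (fo (aL A) ?RLX)"
    using dnat_mem[OF adj_lam RLX rho] by simp
  have eps_b: "drx (aQ A) (aeps A ?LX) b \<in> dcar (aQ A) (fo (aL A) ?RLX)"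
    by (rule doctrine_reindex_mem[OF adj_Q adj_counit_hom[OF LX] b])
  have "AM_box A X b = drx (aQ A) ?L_eta (alam A ?RLX (arho A ?LX b))"
    unfolding AM_box_def using dnat_naturality[OF adj_lam adj_unit_hom[OF X] rho] by simp
  moreover have "dle (aQ A) ?LX (drx (aQ A) ?L_eta (alam A ?RLX (arho A ?LX b)))
      (drx (aQ A) ?L_eta (drx (aQ A) (aeps A ?LX) b))"
    by (rule doctrine_reindex_mono[OF adj_Q L_eta lam_rho eps_b adj_lam_rho_counit[OF LX b]])
  moreover have "drx (aQ A) ?L_eta (drx (aQ A) (aeps A ?LX) b) = b"
    using doctrine_reindex_comp[OF adj_Q L_eta adj_counit_hom[OF LX] b, symmetric]
    by (simp add: adj_triangle_L[OF X] doctrine_reindex_id[OF adj_Q LX b])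
  ultimately show ?thesis by simp
qed

lemma AM_box_le_AM_box_AM_box:
  assumes X: "X \<in> cobj (aC A)" and b: "b \<in> dcar (aQ A) (fo (aL A) X)"
  shows "dle (aQ A) (fo (aL A) X) (AM_box A X b) (AM_box A X (AM_box A X b))"
proof -
  let ?unit_rho = "\<lambda>c. drx (aP A) (aeta A X) (arho A (fo (aL A) X) c)"
  have unit_rho: "?unit_rho c \<in> dcar (aP A) X" if "c \<in> dcar (aQ A) (fo (aL A) X)" for c
    using doctrine_reindex_mem[OF adj_P adj_unit_hom[OF X]] dnat_mem[OF adj_rho functor_obj[OF adj_L X] that]
    by simp
  have box_b: "AM_box A X b \<in> dcar (aQ A) (fo (aL A) X)"
    using dnat_mem[OF is_dnat_AM_box X] b by (simp add: AM_doc_def)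
  have "dle (aP A) X (?unit_rho b) (?unit_rho (alam A X (?unit_rho b)))"
    by (rule adj_lam_rho_unit[OF X unit_rho[OF b]])
  then show ?thesis
    using dnat_mono[OF adj_lam X unit_rho[OF b] unit_rho[OF box_b]] by (simp add: AM_box_def)
qed

lemma interior_op_AM_box: "interior_op (aC A) (AM_doc A) (AM_box A)"
  unfolding interior_op_def
  using is_dnat_AM_box AM_box_le AM_box_le_AM_box_AM_box by (simp add: AM_doc_def)

end

context
  fixes A :: "('oc,'ac,'od,'ad,'e1,'e2) adj"
    and B :: "('oc2,'ac2,'od2,'ad2,'f1,'f2) adj"
    and M :: "('oc,'ac,'od,'ad,'e1,'e2,'oc2,'ac2,'od2,'ad2,'f1,'f2) amor"
  assumes arrow: "is_adj_1arrow A B M"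
begin

lemma
  shows adj_arrow_F: "is_functor (aC A) (aC B) (mF M)"
    and adj_arrow_f: "is_dnat (aC A) (aP A) (doc_comp (aP B) (mF M)) (mf M)"
    and adj_arrow_G: "is_functor (aD A) (aD B) (mG M)"
    and adj_arrow_g: "is_dnat (aD A) (aQ A) (doc_comp (aQ B) (mG M)) (mg M)"
    and adj_arrow_theta: "is_nat (aD A) (aC B) (fcomp (mF M) (aR A)) (fcomp (aR B) (mG M)) (mth M)"
    and adj_arrow_L: "feq (aC A) (fcomp (mG M) (aL A)) (fcomp (aL B) (mF M))"
  using arrow unfolding is_adj_1arrow_def idx_1arrow_def by auto

lemma adj_arrow_L_obj: "X \<in> cobj (aC A) \<Longrightarrow> fo (mG M) (fo (aL A) X) = fo (aL B) (fo (mF M) X)"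
  using adj_arrow_L unfolding feq_def by simp

lemma adj_arrow_unit: "X \<in> cobj (aC A) \<Longrightarrow>
    ccomp (aC B) (mth M (fo (aL A) X)) (fa (mF M) (aeta A X)) = aeta B (fo (mF M) X)"
  using arrow unfolding is_adj_1arrow_def by auto

lemma adj_arrow_lam: "X \<in> cobj (aC A) \<Longrightarrow> a \<in> dcar (aP A) X \<Longrightarrow>
    mg M (fo (aL A) X) (alam A X a) = alam B (fo (mF M) X) (mf M X a)"
  using arrow unfolding is_adj_1arrow_def by auto

lemma adj_arrow_rho: "Y \<in> cobj (aD A) \<Longrightarrow> b \<in> dcar (aQ A) Y \<Longrightarrow>
    dle (aP B) (fo (mF M) (fo (aR A) Y)) (mf M (fo (aR A) Y) (arho A Y b))
      (drx (aP B) (mth M Y) (arho B (fo (mG M) Y) (mg M Y b)))"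
  using arrow unfolding is_adj_1arrow_def by auto

lemma idx_1arrow_AM_1:
  assumes A: "is_adj A"
  shows "idx_1arrow (aC A) (aC B) (AM_doc A) (AM_doc B) (AM_1 A M)"
proof -
  have "is_dnat (aC A) (AM_doc A) (doc_comp (aQ B) (fcomp (mG M) (aL A))) (\<lambda>X. mg M (fo (aL A) X))"
    using is_dnat_doc_comp[OF adj_L[OF A] adj_arrow_g] by (simp add: AM_doc_def doc_comp_fcomp)
  then have "is_dnat (aC A) (AM_doc A) (doc_comp (AM_doc B) (mF M)) (\<lambda>X. mg M (fo (aL A) X))"
    using is_dnat_doc_comp_feq[OF adj_arrow_L] by (simp add: AM_doc_def doc_comp_fcomp)
  then show ?thesis
    unfolding idx_1arrow_def AM_1_def using adj_arrow_F by simp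
qed

lemma adj_arrow_unit_rho_le:
  assumes A: "is_adj A" and B: "is_adj B"
    and X: "X \<in> cobj (aC A)" and b: "b \<in> dcar (aQ A) (fo (aL A) X)"
  shows "dle (aP B) (fo (mF M) X)
      (mf M X (drx (aP A) (aeta A X) (arho A (fo (aL A) X) b)))
      (drx (aP B) (aeta B (fo (mF M) X)) (arho B (fo (aL B) (fo (mF M) X)) (mg M (fo (aL A) X) b)))"
proof -
  let ?Y = "fo (aL A) X"
  let ?F_eta = "fa (mF M) (aeta A X)"
  let ?rho_g = "arho B (fo (mG M) ?Y) (mg M ?Y b)"
  have Y: "?Y \<in> cobj (aD A)" and RY: "fo (aR A) ?Y \<in> cobj (aC A)"
    using functor_obj[OF adj_L[OF A] X] functor_obj[OF adj_R[OF A]] by auto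
  have F_eta: "?F_eta \<in> hom (aC B) (fo (mF M) X) (fo (mF M) (fo (aR A) ?Y))"
    by (rule functor_hom[OF adj_arrow_F adj_unit_hom[OF A X]])
  have theta: "mth M ?Y \<in> hom (aC B) (fo (mF M) (fo (aR A) ?Y)) (fo (aR B) (fo (mG M) ?Y))"
    using nat_hom[OF adj_arrow_theta Y] by simp
  have rho: "arho A ?Y b \<in> dcar (aP A) (fo (aR A) ?Y)"
    using dnat_mem[OF adj_rho[OF A] Y b] by simp
  have f_rho: "mf M (fo (aR A) ?Y) (arho A ?Y b) \<in> dcar (aP B) (fo (mF M) (fo (aR A) ?Y))"
    using dnat_mem[OF adj_arrow_f RY rho] by simp
  have rho_g: "?rho_g \<in> dcar (aP B) (fo (aR B) (fo (mG M) ?Y))"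
    using dnat_mem[OF adj_rho[OF B] functor_obj[OF adj_arrow_G Y]] dnat_mem[OF adj_arrow_g Y b] by simp
  have "mf M X (drx (aP A) (aeta A X) (arho A ?Y b)) = drx (aP B) ?F_eta (mf M (fo (aR A) ?Y) (arho A ?Y b))"
    using dnat_naturality[OF adj_arrow_f adj_unit_hom[OF A X] rho] by simp
  moreover have "dle (aP B) (fo (mF M) X) (drx (aP B) ?F_eta (mf M (fo (aR A) ?Y) (arho A ?Y b)))
      (drx (aP B) ?F_eta (drx (aP B) (mth M ?Y) ?rho_g))"
    by (rule doctrine_reindex_mono[OF adj_P[OF B] F_eta f_rho
          doctrine_reindex_mem[OF adj_P[OF B] theta rho_g] adj_arrow_rho[OF Y b]])
  moreover have "drx (aP B) ?F_eta (drx (aP B) (mth M ?Y) ?rho_g)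
      = drx (aP B) (aeta B (fo (mF M) X)) (arho B (fo (aL B) (fo (mF M) X)) (mg M ?Y b))"
    using doctrine_reindex_comp[OF adj_P[OF B] F_eta theta rho_g, symmetric]
    by (simp add: adj_arrow_unit[OF X] adj_arrow_L_obj[OF X])
  ultimately show ?thesis by simp
qed

lemma box_1arrow_AM_1:
  assumes A: "is_adj A" and B: "is_adj B"
  shows "box_1arrow (aC A) (aC B) (AM_doc A) (AM_box A) (AM_doc B) (AM_box B) (AM_1 A M)"
  unfolding box_1arrow_def
proof (intro conjI idx_1arrow_AM_1[OF A] ballI)
  fix X b assume X: "X \<in> cobj (aC A)" and "b \<in> dcar (AM_doc A) X"
  then have b: "b \<in> dcar (aQ A) (fo (aL A) X)" by (simp add: AM_doc_def)
  have FX: "fo (mF M) X \<in> cobj (aC B)" by (rule functor_obj[OF adj_arrow_F X])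
  have unit_rho_mem: "drx (aP A) (aeta A X) (arho A (fo (aL A) X) b) \<in> dcar (aP A) X"
    using doctrine_reindex_mem[OF adj_P[OF A] adj_unit_hom[OF A X]]
      dnat_mem[OF adj_rho[OF A] functor_obj[OF adj_L[OF A] X] b] by simp
  have f_mem: "mf M X (drx (aP A) (aeta A X) (arho A (fo (aL A) X) b)) \<in> dcar (aP B) (fo (mF M) X)"
    using dnat_mem[OF adj_arrow_f X unit_rho_mem] by simp
  have g_b: "mg M (fo (aL A) X) b \<in> dcar (aQ B) (fo (aL B) (fo (mF M) X))"
    using dnat_mem[OF adj_arrow_g functor_obj[OF adj_L[OF A] X] b] adj_arrow_L_obj[OF X] by simp
  have "drx (aP B) (aeta B (fo (mF M) X)) (arho B (fo (aL B) (fo (mF M) X)) (mg M (fo (aL A) X) b))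
      \<in> dcar (aP B) (fo (mF M) X)"
    using doctrine_reindex_mem[OF adj_P[OF B] adj_unit_hom[OF B FX]]
      dnat_mem[OF adj_rho[OF B] functor_obj[OF adj_L[OF B] FX] g_b] by simp
  then show "dle (AM_doc B) (fo (fst (AM_1 A M)) X) (snd (AM_1 A M) X (AM_box A X b))
      (AM_box B (fo (fst (AM_1 A M)) X) (snd (AM_1 A M) X b))"
    using dnat_mono[OF adj_lam[OF B] FX f_mem _ adj_arrow_unit_rho_le[OF A B X b]]
    by (simp add: AM_doc_def AM_1_def AM_box_def adj_arrow_lam[OF X unit_rho_mem])
qed

lemma AM_1_adj_comp1:
  "idx_eq1 (aC A) (AM_doc A) (AM_1 A (adj_comp1 Cc M' M)) (idx_comp1 (AM_1 B M') (AM_1 A M))"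
  by (simp add: idx_eq1_def AM_1_def adj_comp1_def idx_comp1_def feq_def adj_arrow_L_obj)

end

lemma idx_2arrow_AM_2:
  assumes A: "is_adj A" and M: "is_adj_1arrow A B M" and ab: "is_adj_2arrow A B M N ab"
  shows "idx_2arrow (aC A) (aC B) (AM_doc A) (AM_doc B) (AM_1 A M) (AM_1 A N) (AM_2 ab)"
proof -
  from ab have nat: "is_nat (aC A) (aC B) (mF M) (mF N) (fst ab)"
    and g_le: "\<And>Y b. Y \<in> cobj (aD A) \<Longrightarrow> b \<in> dcar (aQ A) Y \<Longrightarrow>
       dle (aQ B) (fo (mG M) Y) (mg M Y b) (drx (aQ B) (snd ab Y) (mg N Y b))"
    and L_whisker: "\<And>X. X \<in> cobj (aC A) \<Longrightarrow> fa (aL B) (fst ab X) = snd ab (fo (aL A) X)"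
    unfolding is_adj_2arrow_def idx_2arrow_def by auto
  show ?thesis
    unfolding idx_2arrow_def AM_1_def AM_2_def
    using nat g_le[OF functor_obj[OF adj_L[OF A]]] L_whisker adj_arrow_L_obj[OF M]
    by (simp add: AM_doc_def)
qed

lemma AM_1_adj_id1: "idx_eq1 (aC A) (AM_doc A) (AM_1 A (adj_id1 A)) idx_id1"
  by (simp add: idx_eq1_def feq_def AM_1_def adj_id1_def idx_id1_def)

lemma AM_2_adj_id2: "nat_eq (aC A) (AM_2 (adj_id2 B M)) (nat_id (aC B) (fst (AM_1 A M)))"
  by (simp add: nat_eq_def AM_2_def adj_id2_def AM_1_def)

lemma AM_2_adj_vcomp2: "nat_eq (aC A) (AM_2 (adj_vcomp2 B ab' ab)) (vcomp (aC B) (AM_2 ab') (AM_2 ab))"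
  by (simp add: nat_eq_def AM_2_def adj_vcomp2_def)

lemma AM_2_adj_hcomp2:
  "nat_eq (aC A) (AM_2 (adj_hcomp2 Cc M' ab' N ab))
    (hcomp (aC Cc) (fst (AM_1 B M')) (AM_2 ab') (fst (AM_1 A N)) (AM_2 ab))"
  by (simp add: nat_eq_def AM_2_def adj_hcomp2_def AM_1_def)

theorem proposition5p13:
  shows
  "(\<forall>A. is_adj A \<longrightarrow>
        is_doctrine (aC A) (AM_doc A) \<and> interior_op (aC A) (AM_doc A) (AM_box A)) \<and>
   (\<forall>A B M. is_adj A \<and> is_adj B \<and> is_adj_1arrow A B M \<longrightarrow>
        box_1arrow (aC A) (aC B) (AM_doc A) (AM_box A) (AM_doc B) (AM_box B) (AM_1 A M)) \<and>
   (\<forall>A B M N ab. is_adj A \<and> is_adj B \<and> is_adj_1arrow A B M \<and> is_adj_1arrow A B N \<and>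
        is_adj_2arrow A B M N ab \<longrightarrow>
        idx_2arrow (aC A) (aC B) (AM_doc A) (AM_doc B) (AM_1 A M) (AM_1 A N) (AM_2 ab)) \<and>
   (\<forall>A. is_adj A \<longrightarrow> idx_eq1 (aC A) (AM_doc A) (AM_1 A (adj_id1 A)) idx_id1) \<and>
   (\<forall>A B Cc M M'. is_adj A \<and> is_adj B \<and> is_adj Cc \<and> is_adj_1arrow A B M \<and> is_adj_1arrow B Cc M' \<longrightarrow>
        idx_eq1 (aC A) (AM_doc A) (AM_1 A (adj_comp1 Cc M' M)) (idx_comp1 (AM_1 B M') (AM_1 A M))) \<and>
   (\<forall>A B M. is_adj A \<and> is_adj B \<and> is_adj_1arrow A B M \<longrightarrow>
        nat_eq (aC A) (AM_2 (adj_id2 B M)) (nat_id (aC B) (fst (AM_1 A M)))) \<and>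
   (\<forall>A B M N K ab ab'. is_adj A \<and> is_adj B \<and> is_adj_1arrow A B M \<and> is_adj_1arrow A B N \<and>
        is_adj_1arrow A B K \<and> is_adj_2arrow A B M N ab \<and> is_adj_2arrow A B N K ab' \<longrightarrow>
        nat_eq (aC A) (AM_2 (adj_vcomp2 B ab' ab)) (vcomp (aC B) (AM_2 ab') (AM_2 ab))) \<and>
   (\<forall>A B Cc M N M' N' ab ab'. is_adj A \<and> is_adj B \<and> is_adj Cc \<and>
        is_adj_1arrow A B M \<and> is_adj_1arrow A B N \<and> is_adj_1arrow B Cc M' \<and> is_adj_1arrow B Cc N' \<and>
        is_adj_2arrow A B M N ab \<and> is_adj_2arrow B Cc M' N' ab' \<longrightarrow>
        nat_eq (aC A) (AM_2 (adj_hcomp2 Cc M' ab' N ab))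
          (hcomp (aC Cc) (fst (AM_1 B M')) (AM_2 ab') (fst (AM_1 A N)) (AM_2 ab)))"
  by (intro conjI allI impI; (elim conjE)?)
    (simp_all add: is_doctrine_AM_doc interior_op_AM_box box_1arrow_AM_1 idx_2arrow_AM_2
      AM_1_adj_id1 AM_1_adj_comp1 AM_2_adj_id2 AM_2_adj_vcomp2 AM_2_adj_hcomp2)

end
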